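(* Let $G$ be the graph associated with a succinct representation $\mathcal{G}=(H,\{(\ell_i,S_i)\mid 1\le i\le r\})$. Then $\mathcal{I}(G)\ge \sum_{i=1}^r\gamma(\ell_i)$, where $\gamma(\ell)=\ell^2/2$ if $\ell$ is even and $\gamma(\ell)=(\ell^2-1)/2$ if $\ell$ is odd.
   Context: All graphs are finite, simple and undirected. For an ordering $\sigma$ of $V(G)$ and $v\in V(G)$, $N_L(v,\sigma)$ and $N_R(v,\sigma)$ are the sets of neighbours of $v$ preceding and following $v$; $\mathcal{I}(v,\sigma)=\big||N_L(v,\sigma)|-|N_R(v,\sigma)|\big|$, $\mathcal{I}(\sigma)=\sum_v\mathcal{I}(v,\sigma)$, and $\mathcal{I}(G)=\min_\sigma\mathcal{I}(\sigma)$. A succinct representation is a tuple $(H,\{(\ell_i,S_i)\mid 1\le i\le r\})$ where $H$ is a graph, each $\ell_i$ is a positive integer and $S_i\subseteq V(H)$; its associated graph $G$ has vertex set $V(H)\cup C_1\cup\dots\cup C_r$ (pairwise disjoint, $|C_i|=\ell_i$), with edges: those of $H$ on $V(H)$, all edges within each $C_i$, no edges between distinct $C_i$'s, and $v\in V(H)$ adjacent to every vertex of $C_i$ iff $v\in S_i$ (and to none otherwise). *)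

theory Defs
  imports Main
begin

definition simple_graph :: "'v set \<Rightarrow> 'v set set \<Rightarrow> bool" where
  "simple_graph V E \<longleftrightarrow> finite V \<and>
     (\<forall>e\<in>E. \<exists>u v. e = {u, v} \<and> u \<noteq> v \<and> u \<in> V \<and> v \<in> V)"

definition orderings :: "'v set \<Rightarrow> 'v list set" where
  "orderings V = {xs. distinct xs \<and> set xs = V}"

definition precedes :: "'v list \<Rightarrow> 'v \<Rightarrow> 'v \<Rightarrow> bool" where
  "precedes xs u v \<longleftrightarrow> (\<exists>i j. i < j \<and> j < length xs \<and> xs ! i = u \<and> xs ! j = v)"

definition left_nbrs :: "'v set set \<Rightarrow> 'v list \<Rightarrow> 'v \<Rightarrow> 'v set" where
  "left_nbrs E xs v = {u \<in> set xs. {u, v} \<in> E \<and> precedes xs u v}"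

definition right_nbrs :: "'v set set \<Rightarrow> 'v list \<Rightarrow> 'v \<Rightarrow> 'v set" where
  "right_nbrs E xs v = {u \<in> set xs. {u, v} \<in> E \<and> precedes xs v u}"

definition vertex_imbalance :: "'v set set \<Rightarrow> 'v list \<Rightarrow> 'v \<Rightarrow> int" where
  "vertex_imbalance E xs v = \<bar>int (card (left_nbrs E xs v)) - int (card (right_nbrs E xs v))\<bar>"

definition ordering_imbalance :: "'v set set \<Rightarrow> 'v list \<Rightarrow> int" where
  "ordering_imbalance E xs = (\<Sum>v\<in>set xs. vertex_imbalance E xs v)"

definition graph_imbalance :: "'v set \<Rightarrow> 'v set set \<Rightarrow> int" where
  "graph_imbalance V E = Min (ordering_imbalance E ` orderings V)"

(* Succinct representation (H, [(l_1,S_1),...,(l_r,S_r)]) with H = (VH, EH).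
   Associated graph on vertex type 'a + nat \<times> nat: Inl v for v in V(H),
   Inr (i, j) with j < l_i for the clique C_i (indices i < r, 0-based). *)
definition succinct_rep :: "'a set \<Rightarrow> 'a set set \<Rightarrow> (nat \<times> 'a set) list \<Rightarrow> bool" where
  "succinct_rep VH EH ls \<longleftrightarrow> simple_graph VH EH \<and>
     (\<forall>i < length ls. fst (ls ! i) > 0 \<and> snd (ls ! i) \<subseteq> VH)"

definition assoc_vertices :: "'a set \<Rightarrow> (nat \<times> 'a set) list \<Rightarrow> ('a + nat \<times> nat) set" where
  "assoc_vertices VH ls = Inl ` VH \<union> {Inr (i, j) | i j. i < length ls \<and> j < fst (ls ! i)}"

definition assoc_edges :: "'a set set \<Rightarrow> (nat \<times> 'a set) list \<Rightarrow> ('a + nat \<times> nat) set set" where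
  "assoc_edges EH ls =
     (\<lambda>e. Inl ` e) ` EH
     \<union> {{Inr (i, j), Inr (i, k)} | i j k. i < length ls \<and> j < fst (ls ! i) \<and> k < fst (ls ! i) \<and> j \<noteq> k}
     \<union> {{Inl v, Inr (i, j)} | v i j. i < length ls \<and> v \<in> snd (ls ! i) \<and> j < fst (ls ! i)}"

definition gamma :: "nat \<Rightarrow> nat" where
  "gamma l = (if even l then l^2 div 2 else (l^2 - 1) div 2)"

end

theory Submission
  imports Defs
begin

text \<open>The vertices of a clique C_i are true twins: adjacent, with the same neighbours outside
  the pair. If u precedes its twin w in an ordering, every left neighbour of u, u itself and every
  common neighbour between them is a left neighbour of w, and symmetrically on the right, so the
  signed imbalances L - R of u and w differ by at least 2 plus twice the number of vertices between
  them. Listing C_i in order as c_0, ..., c_{l-1} and pairing c_k with c_{l-1-k} gives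
  |I(c_k)| + |I(c_{l-1-k})| \<ge> 2(l - 1 - 2k), and summing over k < l/2 gives gamma(l).\<close>

lemma precedes_in_set: "precedes xs u v \<Longrightarrow> u \<in> set xs \<and> v \<in> set xs"
  unfolding precedes_def by auto

lemma precedes_irrefl: "distinct xs \<Longrightarrow> \<not> precedes xs v v"
  unfolding precedes_def using nth_eq_iff_index_eq by fastforce

lemma precedes_trans:
  assumes "distinct xs" "precedes xs u v" "precedes xs v w"
  shows "precedes xs u w"
proof -
  obtain i j where ij: "i < j" "j < length xs" "xs ! i = u" "xs ! j = v"
    using assms(2) unfolding precedes_def by blast
  obtain j' k where jk: "j' < k" "k < length xs" "xs ! j' = v" "xs ! k = w"
    using assms(3) unfolding precedes_def by blast
  have "j = j'" using assms(1) ij jk nth_eq_iff_index_eq by fastforce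
  then show ?thesis unfolding precedes_def using ij jk by (intro exI[of _ i] exI[of _ k]) auto
qed

lemma precedes_asym: "distinct xs \<Longrightarrow> precedes xs u v \<Longrightarrow> \<not> precedes xs v u"
  using precedes_trans precedes_irrefl by metis

lemma sorted_wrt_precedes: "sorted_wrt (precedes xs) xs"
  unfolding sorted_wrt_iff_nth_less precedes_def by blast

lemma precedes_rev: "precedes (rev xs) u v \<longleftrightarrow> precedes xs v u"
proof -
  have rev_imp: "precedes xs v u" if prec: "precedes (rev xs) u v" for xs :: "'a list" and u v
  proof -
    obtain i j where "i < j" "j < length xs" "rev xs ! i = u" "rev xs ! j = v"
      using prec unfolding precedes_def by auto
    then show ?thesis unfolding precedes_def
      by (intro exI[of _ "length xs - Suc j"] exI[of _ "length xs - Suc i"]) (auto simp: rev_nth)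
  qed
  show ?thesis using rev_imp[of xs] rev_imp[of "rev xs"] by auto
qed

lemma left_nbrs_rev: "left_nbrs E (rev xs) v = right_nbrs E xs v"
  unfolding left_nbrs_def right_nbrs_def precedes_rev by simp

definition true_twins :: "'v set set \<Rightarrow> 'v \<Rightarrow> 'v \<Rightarrow> bool" where
  "true_twins E u w \<longleftrightarrow> {u, w} \<in> E \<and> (\<forall>x. x \<notin> {u, w} \<longrightarrow> ({x, u} \<in> E \<longleftrightarrow> {x, w} \<in> E))"

lemma true_twins_sym: "true_twins E u w \<Longrightarrow> true_twins E w u"
  unfolding true_twins_def by (auto simp: insert_commute)

lemma card_left_nbrs_true_twins:
  assumes dist: "distinct xs" and uw: "precedes xs u w" and twins: "true_twins E u w"
    and B: "\<forall>x\<in>B. precedes xs u x \<and> precedes xs x w \<and> {x, w} \<in> E"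
  shows "card (left_nbrs E xs u) + card B + 1 \<le> card (left_nbrs E xs w)"
proof -
  have "B \<subseteq> set xs" using B by (auto dest: precedes_in_set)
  then have fin: "finite (left_nbrs E xs u)" "finite B" "finite (left_nbrs E xs w)"
    unfolding left_nbrs_def using finite_subset by auto
  have "x \<in> left_nbrs E xs w" if "x \<in> left_nbrs E xs u" for x
  proof -
    have x: "x \<in> set xs" "{x, u} \<in> E" "precedes xs x u"
      using that unfolding left_nbrs_def by auto
    have "x \<notin> {u, w}" using precedes_irrefl[OF dist] precedes_asym[OF dist uw] x(3) by blast
    then have "{x, w} \<in> E" using twins x(2) unfolding true_twins_def by blast
    then show ?thesis using x precedes_trans[OF dist x(3) uw] unfolding left_nbrs_def by auto
  qed
  moreover have "u \<in> left_nbrs E xs w"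
    using twins uw precedes_in_set[OF uw] unfolding true_twins_def left_nbrs_def by auto
  moreover have "B \<subseteq> left_nbrs E xs w"
    using B unfolding left_nbrs_def by (auto dest: precedes_in_set)
  ultimately have sub: "insert u (left_nbrs E xs u \<union> B) \<subseteq> left_nbrs E xs w" by blast
  have "left_nbrs E xs u \<inter> B = {}" "u \<notin> left_nbrs E xs u \<union> B"
    using B precedes_asym[OF dist] precedes_irrefl[OF dist] unfolding left_nbrs_def by auto
  then have "card (insert u (left_nbrs E xs u \<union> B)) = card (left_nbrs E xs u) + card B + 1"
    using fin by (simp add: card_Un_disjoint)
  then show ?thesis using card_mono[OF fin(3) sub] by simp
qed

lemma card_right_nbrs_true_twins:
  assumes "distinct xs" "precedes xs u w" "true_twins E u w"
    and "\<forall>x\<in>B. precedes xs u x \<and> precedes xs x w \<and> {x, u} \<in> E"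
  shows "card (right_nbrs E xs w) + card B + 1 \<le> card (right_nbrs E xs u)"
  using card_left_nbrs_true_twins[of "rev xs" w u E B] assms true_twins_sym[OF assms(3)]
  by (simp add: left_nbrs_rev precedes_rev)

lemma vertex_imbalance_true_twins:
  assumes "distinct xs" "precedes xs u w" "true_twins E u w"
    and "\<forall>x\<in>B. precedes xs u x \<and> precedes xs x w \<and> {x, u} \<in> E \<and> {x, w} \<in> E"
  shows "vertex_imbalance E xs u + vertex_imbalance E xs w \<ge> 2 * int (card B) + 2"
proof -
  have "card (left_nbrs E xs u) + card B + 1 \<le> card (left_nbrs E xs w)"
    by (rule card_left_nbrs_true_twins) (use assms in auto)
  moreover have "card (right_nbrs E xs w) + card B + 1 \<le> card (right_nbrs E xs u)"
    by (rule card_right_nbrs_true_twins) (use assms in auto)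
  ultimately show ?thesis unfolding vertex_imbalance_def by linarith
qed

lemma sum_mirror_pair_bounds_eq_gamma: "(\<Sum>k<l div 2. 2 * int l - 2 - 4 * int k) = int (gamma l)"
proof -
  have closed_form:
    "(\<Sum>k<m. 2 * int l - 2 - 4 * int k) = int m * (2 * int l - 2) - 2 * int m * (int m - 1)" for m by (induction m) (auto simp: algebra_simps)
  obtain m where "l = 2 * m \<or> l = 2 * m + 1" by (metis oddE evenE)
  then show ?thesis
  proof
    assume l: "l = 2 * m"
    have "gamma l = 2 * m * m" unfolding gamma_def l by (simp add: power2_eq_square)
    then show ?thesis unfolding closed_form using l by (simp add: algebra_simps)
  next
    assume l: "l = 2 * m + 1"
    have "l^2 - 1 = 4 * m * m + 4 * m" unfolding l by (simp add: power2_eq_square algebra_simps)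
    then have "gamma l = 2 * m * m + 2 * m" unfolding gamma_def using l by simp
    then show ?thesis unfolding closed_form using l by (simp add: algebra_simps)
  qed
qed

lemma sum_ge_gamma_of_mirror_pairs:
  fixes f :: "nat \<Rightarrow> int"
  assumes nonneg: "\<And>j. f j \<ge> 0"
    and pair: "\<And>k. 2 * k + 1 < l \<Longrightarrow> f k + f (l - 1 - k) \<ge> 2 * int l - 2 - 4 * int k"
  shows "(\<Sum>j<l. f j) \<ge> int (gamma l)"
proof -
  let ?A = "{..<l div 2}"
  let ?mirror = "\<lambda>k. l - 1 - k"
  have inj: "inj_on ?mirror ?A" by (rule inj_onI) auto
  have "(\<Sum>k\<in>?A. 2 * int l - 2 - 4 * int k) \<le> (\<Sum>k\<in>?A. f k + f (?mirror k))"
    by (rule sum_mono) (rule pair, auto)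
  also have "\<dots> = sum f ?A + sum f (?mirror ` ?A)"
    by (simp only: sum.distrib sum.reindex[OF inj] comp_def)
  also have "\<dots> = sum f (?A \<union> ?mirror ` ?A)"
    by (rule sum.union_disjoint[symmetric]) auto
  also have "\<dots> \<le> (\<Sum>j<l. f j)"
    by (rule sum_mono2) (use nonneg in auto)
  finally show ?thesis unfolding sum_mirror_pair_bounds_eq_gamma .
qed

lemma sum_vertex_imbalance_twin_clique_ge_gamma:
  assumes dist: "distinct xs" and C: "C \<subseteq> set xs" "card C = l"
    and twins: "\<And>u w. u \<in> C \<Longrightarrow> w \<in> C \<Longrightarrow> u \<noteq> w \<Longrightarrow> true_twins E u w"
  shows "(\<Sum>v\<in>C. vertex_imbalance E xs v) \<ge> int (gamma l)"
proof -
  define cs where "cs = filter (\<lambda>x. x \<in> C) xs"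
  have dcs: "distinct cs" and scs: "set cs = C" unfolding cs_def using dist C by auto
  have lcs: "length cs = l" using distinct_card[OF dcs] scs C by simp
  have "sorted_wrt (precedes xs) cs" unfolding cs_def by (rule sorted_wrt_filter[OF sorted_wrt_precedes])
  then have prec: "precedes xs (cs ! i) (cs ! j)" if "i < j" "j < l" for i j
    using that lcs unfolding sorted_wrt_iff_nth_less by blast
  have inC: "cs ! i \<in> C" if "i < l" for i using that lcs scs nth_mem by blast
  have "inj_on ((!) cs) {..<l}" using inj_on_nth[OF dcs] lcs by simp
  moreover have "C = (!) cs ` {..<l}" using scs lcs by (auto simp: set_conv_nth)
  ultimately have "(\<Sum>v\<in>C. vertex_imbalance E xs v) = (\<Sum>j<l. vertex_imbalance E xs (cs ! j))"
    by (rule sum.reindex_cong) simp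
  also have "\<dots> \<ge> int (gamma l)"
  proof (rule sum_ge_gamma_of_mirror_pairs)
    fix k assume k: "2 * k + 1 < l"
    let ?u = "cs ! k" and ?w = "cs ! (l - 1 - k)" and ?B = "(!) cs ` {k<..<l - 1 - k}"
    have uw: "precedes xs ?u ?w" using prec k by simp
    then have "?u \<noteq> ?w" using precedes_irrefl[OF dist] by auto
    then have twins_uw: "true_twins E ?u ?w" using twins inC k by simp
    have B: "\<forall>x\<in>?B. precedes xs ?u x \<and> precedes xs x ?w \<and> {x, ?u} \<in> E \<and> {x, ?w} \<in> E"
    proof
      fix x assume "x \<in> ?B"
      then obtain j where j: "k < j" "j < l - 1 - k" "x = cs ! j" by auto
      have between: "precedes xs ?u x" "precedes xs x ?w" using prec j by auto
      then have "x \<noteq> ?u" "x \<noteq> ?w" using precedes_irrefl[OF dist] by auto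
      then show "precedes xs ?u x \<and> precedes xs x ?w \<and> {x, ?u} \<in> E \<and> {x, ?w} \<in> E"
        using between j inC twins k unfolding true_twins_def by auto
    qed
    have "inj_on ((!) cs) {k<..<l - 1 - k}" by (rule inj_on_nth[OF dcs]) (use lcs in auto)
    then have "card ?B = l - 2 - 2 * k" by (simp add: card_image)
    then show "vertex_imbalance E xs ?u + vertex_imbalance E xs ?w \<ge> 2 * int l - 2 - 4 * int k"
      using vertex_imbalance_true_twins[OF dist uw twins_uw B] k by simp
  qed (simp add: vertex_imbalance_def)
  finally show ?thesis .
qed

lemma sum_vertex_imbalance_le_ordering_imbalance:
  assumes "finite I" "\<And>i. i \<in> I \<Longrightarrow> C i \<subseteq> set xs"
    and "\<And>i j. i \<in> I \<Longrightarrow> j \<in> I \<Longrightarrow> i \<noteq> j \<Longrightarrow> C i \<inter> C j = {}"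
  shows "(\<Sum>i\<in>I. \<Sum>v\<in>C i. vertex_imbalance E xs v) \<le> ordering_imbalance E xs"
proof -
  have "(\<Sum>i\<in>I. \<Sum>v\<in>C i. vertex_imbalance E xs v)
      = (\<Sum>v\<in>(\<Union>i\<in>I. C i). vertex_imbalance E xs v)"
    by (rule sum.UNION_disjoint[symmetric])
      (use assms in \<open>auto intro: finite_subset[OF _ finite_set]\<close>)
  also have "\<dots> \<le> ordering_imbalance E xs"
    unfolding ordering_imbalance_def
    by (rule sum_mono2) (use assms(2) in \<open>auto simp: vertex_imbalance_def\<close>)
  finally show ?thesis .
qed

lemma graph_imbalance_ge:
  assumes "finite V" "\<And>xs. xs \<in> orderings V \<Longrightarrow> b \<le> ordering_imbalance E xs"
  shows "b \<le> graph_imbalance V E"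
proof -
  have "finite (orderings V)"
    using finite_subset_distinct[OF assms(1)] unfolding orderings_def
    by (rule rev_finite_subset) auto
  moreover obtain xs where "set xs = V" "distinct xs" using finite_distinct_list[OF assms(1)] by blast
  then have "orderings V \<noteq> {}" unfolding orderings_def by blast
  ultimately show ?thesis unfolding graph_imbalance_def using assms(2) by (simp add: Min_ge_iff)
qed

lemma assoc_edges_Inr_iff:
  assumes "i < length ls" "j < fst (ls ! i)"
  shows "{x, Inr (i, j)} \<in> assoc_edges EH ls \<longleftrightarrow>
    (\<exists>k. x = Inr (i, k) \<and> k < fst (ls ! i) \<and> k \<noteq> j) \<or> (\<exists>v. x = Inl v \<and> v \<in> snd (ls ! i))"
proof
  assume "{x, Inr (i, j)} \<in> assoc_edges EH ls"
  then consider e where "{x, Inr (i, j)} = Inl ` e"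
    | i' j' k where "{x, Inr (i, j)} = {Inr (i', j'), Inr (i', k)}"
        "j' < fst (ls ! i')" "k < fst (ls ! i')" "j' \<noteq> k"
    | v i' j' where "{x, Inr (i, j)} = {Inl v, Inr (i', j')}" "v \<in> snd (ls ! i')"
    unfolding assoc_edges_def by auto
  then show "(\<exists>k. x = Inr (i, k) \<and> k < fst (ls ! i) \<and> k \<noteq> j) \<or> (\<exists>v. x = Inl v \<and> v \<in> snd (ls ! i))"
    by cases (auto simp: doubleton_eq_iff dest: equalityD1)
next
  assume "(\<exists>k. x = Inr (i, k) \<and> k < fst (ls ! i) \<and> k \<noteq> j) \<or> (\<exists>v. x = Inl v \<and> v \<in> snd (ls ! i))"
  then show "{x, Inr (i, j)} \<in> assoc_edges EH ls"
    unfolding assoc_edges_def using assms by blast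
qed

lemma true_twins_assoc_clique:
  assumes "i < length ls" "j < fst (ls ! i)" "k < fst (ls ! i)" "j \<noteq> k"
  shows "true_twins (assoc_edges EH ls) (Inr (i, j)) (Inr (i, k))"
  unfolding true_twins_def using assoc_edges_Inr_iff[OF assms(1)] assms(2-4) by auto

theorem proposition1:
  fixes VH :: "'a set" and EH :: "'a set set" and ls :: "(nat \<times> 'a set) list"
  assumes "succinct_rep VH EH ls"
  shows "graph_imbalance (assoc_vertices VH ls) (assoc_edges EH ls)
           \<ge> (\<Sum>i<length ls. int (gamma (fst (ls ! i))))"
proof (rule graph_imbalance_ge)
  define C where "C i = (\<lambda>j. Inr (i, j) :: 'a + nat \<times> nat) ` {..<fst (ls ! i)}" for i
  have V: "assoc_vertices VH ls = Inl ` VH \<union> (\<Union>i<length ls. C i)"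
    unfolding assoc_vertices_def C_def by auto
  have "finite VH" using assms unfolding succinct_rep_def simple_graph_def by blast
  then show "finite (assoc_vertices VH ls)" unfolding V C_def by simp
  fix xs assume "xs \<in> orderings (assoc_vertices VH ls)"
  then have xs: "distinct xs" "set xs = assoc_vertices VH ls" unfolding orderings_def by auto
  have "card (C i) = fst (ls ! i)" for i unfolding C_def by (simp add: card_image inj_on_def)
  moreover have "true_twins (assoc_edges EH ls) u w"
    if "i < length ls" "u \<in> C i" "w \<in> C i" "u \<noteq> w" for i u w
    using that true_twins_assoc_clique unfolding C_def by blast
  ultimately have "int (gamma (fst (ls ! i))) \<le> (\<Sum>v\<in>C i. vertex_imbalance (assoc_edges EH ls) xs v)"
    if "i < length ls" for i
    using that xs V by (intro sum_vertex_imbalance_twin_clique_ge_gamma) auto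
  then have "(\<Sum>i<length ls. int (gamma (fst (ls ! i))))
      \<le> (\<Sum>i<length ls. \<Sum>v\<in>C i. vertex_imbalance (assoc_edges EH ls) xs v)"
    by (intro sum_mono) simp
  also have "\<dots> \<le> ordering_imbalance (assoc_edges EH ls) xs"
    using xs V by (intro sum_vertex_imbalance_le_ordering_imbalance) (auto simp: C_def)
  finally show "(\<Sum>i<length ls. int (gamma (fst (ls ! i))))
      \<le> ordering_imbalance (assoc_edges EH ls) xs" .
qed

end
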